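(* On each chart of $\mathbb O'P^2$ with coordinates $(u,v)$ (satisfying $1+|u|^2+|v|^2>0$), the symmetric bilinear form whose quadratic form on tangent vectors $(du,dv)=(\xi,\eta)\in\mathbb O'^2$ is $$ds^2=\frac{|\xi|^2(1+|v|^2)+|\eta|^2(1+|u|^2)-2\mathrm{Re}\big[(u\bar v)(\eta\bar\xi)\big]}{(1+|u|^2+|v|^2)^2}$$ is non-degenerate of signature $(8,8)$ at every point.
   Context: Para-octonions $\mathbb O'=\mathbb H\oplus\mathbb H$ with product $(q_1,q_2)(p_1,p_2)=(q_1p_1+\bar p_2q_2,\ p_2q_1+q_2\bar p_1)$, conjugation $\overline{(q_1,q_2)}=(\bar q_1,-q_2)$, $\langle a,b\rangle=\mathrm{Re}(a\bar b)$, $|a|^2=\langle a,a\rangle$ (a form of signature $(4,4)$). $\mathbb O'P^2=\mathcal U/_\sim$ where $\mathcal U=\{(1,y,z):1+|y|^2+|z|^2>0\}\cup\{(x,1,z):|x|^2+1+|z|^2>0\}\cup\{(x,y,1):|x|^2+|y|^2+1>0\}$ and $[a,b,c]\sim[d,e,f]$ iff $(a,b,c)=(d\lambda,e\lambda,f\lambda)$ for some $\lambda$ with $|\lambda|^2>0$; charts $[1,u,v]\mapsto(u,v)$, $[u,1,v]\mapsto(u,v)$, $[u,v,1]\mapsto(u,v)$. *)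

theory Defs
  imports "HOL-Analysis.Analysis" "HOL-Library.Numeral_Type"
begin

datatype quat = Quat (qre: real) (qi: real) (qj: real) (qk: real)

definition qadd :: "quat \<Rightarrow> quat \<Rightarrow> quat" where
  "qadd p q = Quat (qre p + qre q) (qi p + qi q) (qj p + qj q) (qk p + qk q)"

definition qneg :: "quat \<Rightarrow> quat" where
  "qneg q = Quat (- qre q) (- qi q) (- qj q) (- qk q)"

definition qmult :: "quat \<Rightarrow> quat \<Rightarrow> quat" where
  "qmult p q = Quat
     (qre p * qre q - qi p * qi q - qj p * qj q - qk p * qk q)
     (qre p * qi q + qi p * qre q + qj p * qk q - qk p * qj q)
     (qre p * qj q - qi p * qk q + qj p * qre q + qk p * qi q)
     (qre p * qk q + qi p * qj q - qj p * qi q + qk p * qre q)"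

definition qcnj :: "quat \<Rightarrow> quat" where
  "qcnj q = Quat (qre q) (- qi q) (- qj q) (- qk q)"

type_synonym poct = "quat \<times> quat"

definition pmult :: "poct \<Rightarrow> poct \<Rightarrow> poct" where
  "pmult a b = (case a of (q1, q2) \<Rightarrow> case b of (p1, p2) \<Rightarrow>
     (qadd (qmult q1 p1) (qmult (qcnj p2) q2), qadd (qmult p2 q1) (qmult q2 (qcnj p1))))"

definition pcnj :: "poct \<Rightarrow> poct" where
  "pcnj a = (qcnj (fst a), qneg (snd a))"

definition pRe :: "poct \<Rightarrow> real" where
  "pRe a = qre (fst a)"

text \<open>\<langle>a,b\<rangle> = Re(a conj b), |a|^2 = \<langle>a,a\<rangle> (signature (4,4)).\<close>
definition pinner :: "poct \<Rightarrow> poct \<Rightarrow> real" where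
  "pinner a b = pRe (pmult a (pcnj b))"

definition pnorm2 :: "poct \<Rightarrow> real" where
  "pnorm2 a = pinner a a"

definition ds2 :: "poct \<Rightarrow> poct \<Rightarrow> poct \<Rightarrow> poct \<Rightarrow> real" where
  "ds2 u v xi eta =
     (pnorm2 xi * (1 + pnorm2 v) + pnorm2 eta * (1 + pnorm2 u)
      - 2 * pRe (pmult (pmult u (pcnj v)) (pmult eta (pcnj xi))))
     / (1 + pnorm2 u + pnorm2 v)^2"

definition tan_xi :: "real^16 \<Rightarrow> poct" where
  "tan_xi w = (Quat (w$0) (w$1) (w$2) (w$3), Quat (w$4) (w$5) (w$6) (w$7))"

definition tan_eta :: "real^16 \<Rightarrow> poct" where
  "tan_eta w = (Quat (w$8) (w$9) (w$10) (w$11), Quat (w$12) (w$13) (w$14) (w$15))"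

definition metric_form :: "poct \<Rightarrow> poct \<Rightarrow> real^16 \<Rightarrow> real^16 \<Rightarrow> real" where
  "metric_form u v X Y =
     (ds2 u v (tan_xi (X + Y)) (tan_eta (X + Y))
      - ds2 u v (tan_xi X) (tan_eta X) - ds2 u v (tan_xi Y) (tan_eta Y)) / 2"

definition pos_index :: "('a::euclidean_space \<Rightarrow> 'a \<Rightarrow> real) \<Rightarrow> nat" where
  "pos_index B = Max {dim S | S. subspace S \<and> (\<forall>x\<in>S. x \<noteq> 0 \<longrightarrow> B x x > 0)}"

definition neg_index :: "('a::euclidean_space \<Rightarrow> 'a \<Rightarrow> real) \<Rightarrow> nat" where
  "neg_index B = Max {dim S | S. subspace S \<and> (\<forall>x\<in>S. x \<noteq> 0 \<longrightarrow> B x x < 0)}"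

definition nondegenerate :: "('a::euclidean_space \<Rightarrow> 'a \<Rightarrow> real) \<Rightarrow> bool" where
  "nondegenerate B \<longleftrightarrow> (\<forall>x. (\<forall>y. B x y = 0) \<longrightarrow> x = 0)"

definition has_signature :: "('a::euclidean_space \<Rightarrow> 'a \<Rightarrow> real) \<Rightarrow> nat \<Rightarrow> nat \<Rightarrow> bool" where
  "has_signature B p q \<longleftrightarrow> pos_index B = p \<and> neg_index B = q"

end

theory Submission
  imports Defs
begin

(* Write \<alpha> = 1 + |v|^2, \<beta> = 1 + |u|^2, a = u conj(v) and D = 1 + |u|^2 + |v|^2. Then
   D^2 ds^2 = \<alpha>|\<xi>|^2 + \<beta>|\<eta>|^2 - 2<\<xi>, a \<eta>>, the quadratic form of the block matrix
   [[\<alpha>, -a], [-conj(a), \<beta>]]. Because O' is a composition algebra, |a|^2 = |u|^2 |v|^2, hence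
   \<alpha>\<beta> - |a|^2 = D > 0 and \<alpha> + \<beta> = 1 + D > 0. Completing the square in the variable whose
   coefficient is positive, a linear change of variables brings ds^2 to c1|\<xi>|^2 + c2|\<eta>|^2
   with c1, c2 > 0. As |.|^2 = |q1|^2 - |q2|^2 on O' = H + H, this form is positive definite on
   the 8-dimensional space of pairs with vanishing second quaternion halves and negative
   definite on the complementary one; a symmetric form that is definite of opposite signs on
   two complementary subspaces is nondegenerate and has their dimensions as its indices. *)

section \<open>Signature from complementary definite subspaces\<close>

lemma dim_add_le_DIM_if_Int_zero:
  fixes S T :: "'a::euclidean_space set"
  assumes "subspace S" "subspace T" "S \<inter> T \<subseteq> {0}"
  shows "dim S + dim T \<le> DIM('a)"
proof -
  have "dim {x + y |x y. x \<in> S \<and> y \<in> T} + dim (S \<inter> T) = dim S + dim T"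
    using dim_sums_Int assms(1,2) by blast
  moreover have "dim (S \<inter> T) = 0"
    using assms(3) by simp
  ultimately show ?thesis
    using dim_subset_UNIV[of "{x + y |x y. x \<in> S \<and> y \<in> T}"] by simp
qed

lemma sums_eq_UNIV_if_Int_zero:
  fixes S T :: "'a::euclidean_space set"
  assumes "subspace S" "subspace T" "S \<inter> T \<subseteq> {0}" "dim S + dim T = DIM('a)"
  shows "{x + y |x y. x \<in> S \<and> y \<in> T} = UNIV"
proof -
  let ?ST = "{x + y |x y. x \<in> S \<and> y \<in> T}"
  have "dim (S \<inter> T) = 0"
    using assms(3) by simp
  then have "dim ?ST = DIM('a)"
    using dim_sums_Int[OF assms(1,2)] assms(4) by linarith
  then have "span ?ST = UNIV"
    using dim_eq_full by blast
  moreover have "span ?ST = ?ST"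
    using subspace_sums[OF assms(1,2)] by (rule span_eq_iff[THEN iffD2])
  ultimately show ?thesis
    by simp
qed

lemma pos_index_eq_dim:
  fixes B :: "'a::euclidean_space \<Rightarrow> 'a \<Rightarrow> real"
  assumes "subspace P" "subspace N" "dim P + dim N = DIM('a)"
    and pos: "\<forall>x\<in>P. x \<noteq> 0 \<longrightarrow> B x x > 0"
    and neg: "\<forall>x\<in>N. x \<noteq> 0 \<longrightarrow> B x x < 0"
  shows "pos_index B = dim P"
proof -
  let ?K = "{dim S | S. subspace S \<and> (\<forall>x\<in>S. x \<noteq> 0 \<longrightarrow> B x x > 0)}"
  have bounded: "k \<le> dim P" if "k \<in> ?K" for k
  proof -
    obtain S where S: "k = dim S" "subspace S" "\<forall>x\<in>S. x \<noteq> 0 \<longrightarrow> B x x > 0"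
      using \<open>k \<in> ?K\<close> by blast
    have "S \<inter> N \<subseteq> {0}"
      using S(3) neg by force
    then show ?thesis
      using dim_add_le_DIM_if_Int_zero[OF S(2) assms(2)] S(1) assms(3) by simp
  qed
  have "dim P \<in> ?K"
    using assms(1) pos by blast
  moreover have "finite ?K"
    using bounded by (meson finite_atMost finite_subset subsetI atMost_iff)
  ultimately show ?thesis
    unfolding pos_index_def using bounded by (intro Max_eqI) auto
qed

lemma neg_index_eq_pos_index_uminus: "neg_index B = pos_index (\<lambda>x y. - B x y)"
  by (simp add: neg_index_def pos_index_def)

lemma nondegenerate_if_definite_subspaces:
  fixes B :: "'a::euclidean_space \<Rightarrow> 'a \<Rightarrow> real"
  assumes B: "bilinear B" "\<forall>x y. B x y = B y x"
    and "subspace P" "subspace N" "dim P + dim N = DIM('a)"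
    and pos: "\<forall>x\<in>P. x \<noteq> 0 \<longrightarrow> B x x > 0"
    and neg: "\<forall>x\<in>N. x \<noteq> 0 \<longrightarrow> B x x < 0"
  shows "nondegenerate B"
  unfolding nondegenerate_def
proof (intro allI impI)
  fix x assume radical: "\<forall>y. B x y = 0"
  have "P \<inter> N \<subseteq> {0}"
    using pos neg by force
  then have "x \<in> {p + n |p n. p \<in> P \<and> n \<in> N}"
    using sums_eq_UNIV_if_Int_zero assms(3-5) by blast
  then obtain p n where pn: "x = p + n" "p \<in> P" "n \<in> N" by blast
  have "B p p = B n n"
    using radical[rule_format, of p] radical[rule_format, of n] B(2)[rule_format, of n p]
    by (simp add: pn(1) bilinear_ladd[OF B(1)])
  moreover have "B p p \<ge> 0" "B n n \<le> 0"
    using pos pn(2) neg pn(3) bilinear_lzero[OF B(1)] by (metis less_imp_le order_refl)+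
  ultimately have "B p p = 0" "B n n = 0" by linarith+
  then have "p = 0" "n = 0"
    using pos pn(2) neg pn(3) by force+
  then show "x = 0"
    using pn(1) by simp
qed

lemma signature_of_definite_subspaces:
  fixes B :: "'a::euclidean_space \<Rightarrow> 'a \<Rightarrow> real"
  assumes "bilinear B" "\<forall>x y. B x y = B y x"
    and "subspace P" "subspace N" "dim P + dim N = DIM('a)"
    and "\<forall>x\<in>P. x \<noteq> 0 \<longrightarrow> B x x > 0" "\<forall>x\<in>N. x \<noteq> 0 \<longrightarrow> B x x < 0"
  shows "has_signature B (dim P) (dim N) \<and> nondegenerate B"
proof -
  have "pos_index B = dim P"
    using pos_index_eq_dim assms(3-7) by blast
  moreover have "neg_index B = dim N"
    unfolding neg_index_eq_pos_index_uminus
    using pos_index_eq_dim[of N P "\<lambda>x y. - B x y"] assms(3-7) by (simp add: add.commute)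
  ultimately show ?thesis
    using nondegenerate_if_definite_subspaces assms unfolding has_signature_def by blast
qed

section \<open>Para-octonions as a composition algebra\<close>

lemma quat_eq_iff: "p = q \<longleftrightarrow> qre p = qre q \<and> qi p = qi q \<and> qj p = qj q \<and> qk p = qk q"
  by (cases p; cases q) simp

(* Through the product instance this also makes poct = quat \<times> quat a real vector space. *)
instantiation quat :: real_vector
begin

definition "0 = Quat 0 0 0 0"
definition "p + q = qadd p q"
definition "- q = qneg q"
definition "p - q = p + - (q::quat)"
definition "scaleR c q = Quat (c * qre q) (c * qi q) (c * qj q) (c * qk q)"

instance
  by standard (simp_all add: quat_eq_iff zero_quat_def plus_quat_def uminus_quat_def
      minus_quat_def scaleR_quat_def qadd_def qneg_def algebra_simps)

end

lemma quat_components [simp]: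
  "qre 0 = 0" "qi 0 = 0" "qj 0 = 0" "qk 0 = 0"
  "qre (p + q) = qre p + qre q" "qi (p + q) = qi p + qi q"
  "qj (p + q) = qj p + qj q" "qk (p + q) = qk p + qk q"
  "qre (c *\<^sub>R q) = c * qre q" "qi (c *\<^sub>R q) = c * qi q"
  "qj (c *\<^sub>R q) = c * qj q" "qk (c *\<^sub>R q) = c * qk q"
  by (simp_all add: zero_quat_def plus_quat_def scaleR_quat_def qadd_def)

lemmas poct_defs = pmult_def pcnj_def pinner_def pRe_def qadd_def qneg_def qmult_def qcnj_def
  case_prod_unfold

lemma pinner_commute: "pinner x y = pinner y x"
  by (simp add: poct_defs algebra_simps)

lemma bilinear_pinner: "bilinear pinner"
  unfolding bilinear_def
  by (auto intro!: linearI simp: poct_defs algebra_simps)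

lemma bilinear_pmult: "bilinear pmult"
  unfolding bilinear_def
  by (auto intro!: linearI simp: poct_defs quat_eq_iff algebra_simps)

lemmas poct_bilinear_simps =
  bilinear_ladd[OF bilinear_pinner] bilinear_radd[OF bilinear_pinner]
  bilinear_lmul[OF bilinear_pinner] bilinear_rmul[OF bilinear_pinner]
  bilinear_radd[OF bilinear_pmult] bilinear_rmul[OF bilinear_pmult]

lemma pnorm2_add: "pnorm2 (x + y) = pnorm2 x + 2 * pinner x y + pnorm2 y"
  by (simp add: pnorm2_def poct_bilinear_simps pinner_commute[of y x])

lemma pnorm2_scaleR: "pnorm2 (c *\<^sub>R x) = c\<^sup>2 * pnorm2 x"
  by (simp add: pnorm2_def poct_bilinear_simps power2_eq_square)

definition qnorm2 :: "quat \<Rightarrow> real" where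
  "qnorm2 q = (qre q)\<^sup>2 + (qi q)\<^sup>2 + (qj q)\<^sup>2 + (qk q)\<^sup>2"

lemma qnorm2_nonneg: "qnorm2 q \<ge> 0"
  by (simp add: qnorm2_def)

lemma qnorm2_pos: "q \<noteq> 0 \<Longrightarrow> qnorm2 q > 0"
  by (auto simp: qnorm2_def quat_eq_iff add_nonneg_eq_0_iff
      intro!: order.not_eq_order_implies_strict)

lemma qnorm2_qmult: "qnorm2 (qmult p q) = qnorm2 p * qnorm2 q"
  by (simp add: qnorm2_def qmult_def power2_eq_square algebra_simps)

lemma qnorm2_qcnj: "qnorm2 (qcnj q) = qnorm2 q"
  by (simp add: qnorm2_def qcnj_def)

lemma pnorm2_Pair: "pnorm2 (p, q) = qnorm2 p - qnorm2 q"
  by (simp add: pnorm2_def poct_defs qnorm2_def power2_eq_square)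

lemma pnorm2_pmult: "pnorm2 (pmult a b) = pnorm2 a * pnorm2 b"
proof -
  obtain q1 q2 p1 p2 where ab: "a = (q1, q2)" "b = (p1, p2)" by fastforce
  have cross_terms_cancel:
    "qnorm2 (qadd (qmult q1 p1) (qmult (qcnj p2) q2)) - qnorm2 (qadd (qmult p2 q1) (qmult q2 (qcnj p1)))
      = qnorm2 (qmult q1 p1) + qnorm2 (qmult (qcnj p2) q2) - qnorm2 (qmult p2 q1) - qnorm2 (qmult q2 (qcnj p1))"
    by (simp add: qnorm2_def qadd_def qmult_def qcnj_def power2_eq_square algebra_simps)
  show ?thesis
    by (simp add: ab pmult_def pnorm2_Pair cross_terms_cancel qnorm2_qmult qnorm2_qcnj algebra_simps)
qed

lemma pnorm2_pcnj: "pnorm2 (pcnj a) = pnorm2 a"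
  by (simp add: pnorm2_def poct_defs algebra_simps)

lemma pRe_pmult_pmult_pcnj: "pRe (pmult a (pmult e (pcnj x))) = pinner x (pmult a e)"
  by (simp add: poct_defs algebra_simps)

lemma pinner_pmult_swap: "pinner x (pmult a e) = pinner e (pmult (pcnj a) x)"
  by (simp add: poct_defs algebra_simps)

section \<open>Diagonalizing a Hermitian block form on O' \<times> O'\<close>

definition block_form :: "real \<Rightarrow> real \<Rightarrow> poct \<Rightarrow> poct \<times> poct \<Rightarrow> poct \<times> poct \<Rightarrow> real" where
  "block_form \<alpha> \<beta> a z w = \<alpha> * pinner (fst z) (fst w) + \<beta> * pinner (snd z) (snd w)
     - pinner (fst z) (pmult a (snd w)) - pinner (fst w) (pmult a (snd z))"

lemma bilinear_block_form: "bilinear (block_form \<alpha> \<beta> a)"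
  unfolding bilinear_def block_form_def
  by (intro allI conjI linearI) (simp_all add: poct_bilinear_simps algebra_simps)

lemma block_form_commute: "block_form \<alpha> \<beta> a z w = block_form \<alpha> \<beta> a w z"
  by (simp add: block_form_def pinner_commute)

lemma block_form_polarization:
  "block_form \<alpha> \<beta> a (z + w) (z + w) - block_form \<alpha> \<beta> a z z - block_form \<alpha> \<beta> a w w
    = 2 * block_form \<alpha> \<beta> a z w"
  by (simp add: bilinear_ladd[OF bilinear_block_form] bilinear_radd[OF bilinear_block_form]
      block_form_commute[of \<alpha> \<beta> a w z])

lemma block_form_swap:
  "block_form \<alpha> \<beta> a (\<xi>, \<eta>) (\<xi>', \<eta>') = block_form \<beta> \<alpha> (pcnj a) (\<eta>, \<xi>) (\<eta>', \<xi>')"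
  using pinner_pmult_swap[of \<xi> a \<eta>'] pinner_pmult_swap[of \<xi>' a \<eta>] by (simp add: block_form_def)

lemma block_form_diag:
  "block_form \<alpha> \<beta> a (\<xi>, \<eta>) (\<xi>, \<eta>) = \<alpha> * pnorm2 \<xi> + \<beta> * pnorm2 \<eta> - 2 * pinner \<xi> (pmult a \<eta>)"
  by (simp add: block_form_def pnorm2_def)

lemma block_form_complete_square:
  assumes "\<alpha> \<noteq> 0"
  shows "block_form \<alpha> \<beta> a (\<xi> + (1/\<alpha>) *\<^sub>R pmult a \<eta>, \<eta>) (\<xi> + (1/\<alpha>) *\<^sub>R pmult a \<eta>, \<eta>)
    = \<alpha> * pnorm2 \<xi> + (\<alpha> * \<beta> - pnorm2 a) / \<alpha> * pnorm2 \<eta>"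
proof -
  let ?y = "pmult a \<eta>" and ?c = "1/\<alpha>"
  have "block_form \<alpha> \<beta> a (\<xi> + ?c *\<^sub>R ?y, \<eta>) (\<xi> + ?c *\<^sub>R ?y, \<eta>)
      = \<alpha> * pnorm2 (\<xi> + ?c *\<^sub>R ?y) + \<beta> * pnorm2 \<eta> - 2 * pinner (\<xi> + ?c *\<^sub>R ?y) ?y"
    by (rule block_form_diag)
  also have "\<dots> = \<alpha> * (pnorm2 \<xi> + 2 * ?c * pinner \<xi> ?y + ?c\<^sup>2 * (pnorm2 a * pnorm2 \<eta>))
      + \<beta> * pnorm2 \<eta> - 2 * (pinner \<xi> ?y + ?c * (pnorm2 a * pnorm2 \<eta>))"
    by (simp add: pnorm2_add pnorm2_scaleR pnorm2_pmult poct_bilinear_simps flip: pnorm2_def)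
  also have "\<dots> = \<alpha> * pnorm2 \<xi> + (\<alpha> * \<beta> - pnorm2 a) / \<alpha> * pnorm2 \<eta>"
    using assms by (simp add: field_simps power2_eq_square)
  finally show ?thesis .
qed

lemma inj_plus_square_zero:
  assumes "linear g" "\<And>z. g (g z) = 0"
  shows "inj (\<lambda>z. z + g z)"
proof (rule injI)
  fix z w assume "z + g z = w + g w"
  then have diff: "z - w = - g (z - w)"
    by (simp add: linear_diff[OF assms(1)] algebra_simps)
  then have "g (z - w) = 0"
    by (metis assms linear_neg neg_equal_0_iff_equal)
  then show "z = w"
    using diff by simp
qed

lemma block_form_diagonalization_pos:
  assumes "\<alpha> > 0"
  obtains S where "linear S" "inj S"
    "\<And>z. block_form \<alpha> \<beta> a (S z) (S z) = \<alpha> * pnorm2 (fst z) + (\<alpha> * \<beta> - pnorm2 a) / \<alpha> * pnorm2 (snd z)"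
proof -
  define g where "g z = ((1/\<alpha>) *\<^sub>R pmult a (snd z), 0 :: poct)" for z :: "poct \<times> poct"
  have g: "linear g" "\<And>z. g (g z) = 0"
    unfolding g_def
    by (intro linearI; simp add: poct_bilinear_simps scaleR_add_right)
      (simp add: bilinear_rzero[OF bilinear_pmult] prod_eq_iff)
  show thesis
  proof (rule that[of "\<lambda>z. z + g z"])
    show "linear (\<lambda>z. z + g z)"
      using g(1) by (rule linear_compose_add[OF linear_ident])
    show "inj (\<lambda>z. z + g z)"
      using g by (rule inj_plus_square_zero)
    show "block_form \<alpha> \<beta> a (z + g z) (z + g z)
      = \<alpha> * pnorm2 (fst z) + (\<alpha> * \<beta> - pnorm2 a) / \<alpha> * pnorm2 (snd z)" for z
      using block_form_complete_square[of \<alpha>] assms by (cases z) (simp add: g_def)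
  qed
qed

lemma linear_swap: "linear (prod.swap :: 'a::real_vector \<times> 'a \<Rightarrow> 'a \<times> 'a)"
  by (intro linearI) auto

lemma block_form_diagonalization:
  assumes "\<alpha> > 0 \<or> \<beta> > 0" "\<alpha> * \<beta> - pnorm2 a > 0"
  obtains S c1 c2 where "linear S" "inj S" "c1 > 0" "c2 > 0"
    "\<And>z. block_form \<alpha> \<beta> a (S z) (S z) = c1 * pnorm2 (fst z) + c2 * pnorm2 (snd z)"
  using assms(1)
proof
  assume "\<alpha> > 0"
  then obtain S where "linear S" "inj S"
    "\<And>z. block_form \<alpha> \<beta> a (S z) (S z)
       = \<alpha> * pnorm2 (fst z) + (\<alpha> * \<beta> - pnorm2 a) / \<alpha> * pnorm2 (snd z)"
    using block_form_diagonalization_pos[of \<alpha> \<beta> a] by auto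
  then show thesis
    using that[of S \<alpha> "(\<alpha> * \<beta> - pnorm2 a) / \<alpha>"] assms(2) \<open>\<alpha> > 0\<close> by simp
next
  assume "\<beta> > 0"
  then obtain S where S: "linear S" "inj S"
    "\<And>z. block_form \<beta> \<alpha> (pcnj a) (S z) (S z)
       = \<beta> * pnorm2 (fst z) + (\<beta> * \<alpha> - pnorm2 a) / \<beta> * pnorm2 (snd z)"
    using block_form_diagonalization_pos[of \<beta> \<alpha> "pcnj a"] by (auto simp: pnorm2_pcnj)
  show thesis
  proof (rule that[of "prod.swap \<circ> S \<circ> prod.swap" "(\<beta> * \<alpha> - pnorm2 a) / \<beta>" \<beta>])
    show "linear (prod.swap \<circ> S \<circ> prod.swap)"
      using S(1) linear_swap by (intro linear_compose)
    show "inj (prod.swap \<circ> S \<circ> prod.swap)"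
      using S(2) by (simp add: inj_compose)
    show "block_form \<alpha> \<beta> a ((prod.swap \<circ> S \<circ> prod.swap) z) ((prod.swap \<circ> S \<circ> prod.swap) z)
      = (\<beta> * \<alpha> - pnorm2 a) / \<beta> * pnorm2 (fst z) + \<beta> * pnorm2 (snd z)" for z
      using S(3)[of "prod.swap z"]
      by (cases "S (prod.swap z)") (simp add: block_form_swap[of \<alpha> \<beta> a] add.commute)
  qed (use assms(2) \<open>\<beta> > 0\<close> in \<open>simp_all add: mult.commute\<close>)
qed

lemma ds2_eq_block_form:
  "ds2 u v \<xi> \<eta> = block_form (1 + pnorm2 v) (1 + pnorm2 u) (pmult u (pcnj v)) (\<xi>, \<eta>) (\<xi>, \<eta>)
    / (1 + pnorm2 u + pnorm2 v)\<^sup>2"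
  by (simp add: ds2_def block_form_diag pRe_pmult_pmult_pcnj algebra_simps)

definition tan_pair :: "real^16 \<Rightarrow> poct \<times> poct" where
  "tan_pair X = (tan_xi X, tan_eta X)"

definition tan_vec :: "poct \<times> poct \<Rightarrow> real^16" where
  "tan_vec w = (\<chi> i.
     if i = 0 then qre (fst (fst w)) else if i = 1 then qi (fst (fst w))
     else if i = 2 then qj (fst (fst w)) else if i = 3 then qk (fst (fst w))
     else if i = 4 then qre (snd (fst w)) else if i = 5 then qi (snd (fst w))
     else if i = 6 then qj (snd (fst w)) else if i = 7 then qk (snd (fst w))
     else if i = 8 then qre (fst (snd w)) else if i = 9 then qi (fst (snd w))
     else if i = 10 then qj (fst (snd w)) else if i = 11 then qk (fst (snd w))
     else if i = 12 then qre (snd (snd w)) else if i = 13 then qi (snd (snd w))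
     else if i = 14 then qj (snd (snd w)) else qk (snd (snd w)))"

lemma index16_cases: "(i::16) \<in> {0,1,2,3,4,5,6,7,8,9,10,11,12,13,14,15}"
proof (cases i)
  case (of_int k)
  then have "k \<in> {0,1,2,3,4,5,6,7,8,9,10,11,12,13,14,15}" by simp presburger
  then show ?thesis using of_int by auto
qed

lemma tan_pair_components [simp]: "fst (tan_pair X) = tan_xi X" "snd (tan_pair X) = tan_eta X"
  by (simp_all add: tan_pair_def)

lemma tan_pair_tan_vec [simp]: "tan_pair (tan_vec w) = w"
  by (simp add: tan_pair_def tan_vec_def tan_xi_def tan_eta_def)

lemma tan_vec_tan_pair [simp]: "tan_vec (tan_pair X) = X"
proof -
  have "tan_vec (tan_pair X) $ i = X $ i" for i
    using index16_cases[of i] by (auto simp: tan_vec_def tan_pair_def tan_xi_def tan_eta_def)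
  then show ?thesis by (simp add: vec_eq_iff)
qed

lemma inj_tan_pair: "inj tan_pair"
  by (metis injI tan_vec_tan_pair)

lemma inj_tan_vec: "inj tan_vec"
  by (metis injI tan_pair_tan_vec)

lemma linear_tan_pair: "linear tan_pair"
  by (intro linearI) (simp_all add: tan_pair_def tan_xi_def tan_eta_def quat_eq_iff)

lemma linear_tan_vec: "linear tan_vec"
proof (intro linearI)
  show "tan_vec (w + w') = tan_vec w + tan_vec w'" for w w'
    by (metis linear_add[OF linear_tan_pair] tan_pair_tan_vec tan_vec_tan_pair)
  show "tan_vec (c *\<^sub>R w) = c *\<^sub>R tan_vec w" for c w
    by (metis linear_scale[OF linear_tan_pair] tan_pair_tan_vec tan_vec_tan_pair)
qed

lemma metric_form_eq:
  "metric_form u v X Y = block_form (1 + pnorm2 v) (1 + pnorm2 u) (pmult u (pcnj v))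
     (tan_pair X) (tan_pair Y) / (1 + pnorm2 u + pnorm2 v)\<^sup>2"
proof -
  let ?B = "block_form (1 + pnorm2 v) (1 + pnorm2 u) (pmult u (pcnj v))"
  have "ds2 u v (tan_xi Z) (tan_eta Z) = ?B (tan_pair Z) (tan_pair Z) / (1 + pnorm2 u + pnorm2 v)\<^sup>2" for Z
    by (simp add: ds2_eq_block_form tan_pair_def)
  then show ?thesis
    by (simp add: metric_form_def linear_add[OF linear_tan_pair] block_form_polarization
        flip: diff_divide_distrib)
qed

lemma bilinear_metric_form: "bilinear (metric_form u v)"
  unfolding bilinear_def metric_form_eq
  by (intro allI conjI linearI)
    (simp_all add: linear_add[OF linear_tan_pair] linear_scale[OF linear_tan_pair]
      bilinear_ladd[OF bilinear_block_form] bilinear_radd[OF bilinear_block_form]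
      bilinear_lmul[OF bilinear_block_form] bilinear_rmul[OF bilinear_block_form]
      add_divide_distrib)

lemma metric_form_commute: "metric_form u v X Y = metric_form u v Y X"
  by (simp add: metric_form_eq block_form_commute)

lemma metric_form_diag: "metric_form u v X X = ds2 u v (tan_xi X) (tan_eta X)"
  by (simp add: metric_form_eq ds2_eq_block_form tan_pair_def)

lemma weighted_qnorm2_pos:
  assumes "c1 > 0" "c2 > 0" "p \<noteq> 0 \<or> q \<noteq> 0"
  shows "c1 * qnorm2 p + c2 * qnorm2 q > 0"
  using assms qnorm2_pos[of p] qnorm2_pos[of q] qnorm2_nonneg[of p] qnorm2_nonneg[of q]
  by (auto intro: add_pos_nonneg add_nonneg_pos)

lemma tan_pair_eq_0_iff: "tan_pair X = 0 \<longleftrightarrow> X = 0"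
  by (metis linear_0[OF linear_tan_pair] linear_0[OF linear_tan_vec] tan_vec_tan_pair)

lemma weighted_pnorm2_pos_on_coords:
  assumes "c1 > 0" "c2 > 0" "X \<in> {X. \<forall>i. i \<notin> {0,1,2,3,8,9,10,11} \<longrightarrow> X $ i = 0}" "X \<noteq> 0"
  shows "c1 * pnorm2 (tan_xi X) + c2 * pnorm2 (tan_eta X) > 0"
proof -
  obtain p q where pq: "tan_xi X = (p, 0)" "tan_eta X = (q, 0)"
    using assms(3) by (simp add: tan_xi_def tan_eta_def zero_quat_def)
  then have "p \<noteq> 0 \<or> q \<noteq> 0"
    using assms(4) tan_pair_eq_0_iff[of X] by (auto simp: tan_pair_def zero_prod_def)
  then have "c1 * qnorm2 p + c2 * qnorm2 q > 0"
    by (rule weighted_qnorm2_pos[OF assms(1,2)])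
  then show ?thesis
    by (simp add: pq pnorm2_Pair qnorm2_def[of 0])
qed

lemma weighted_pnorm2_neg_on_coords:
  assumes "c1 > 0" "c2 > 0" "X \<in> {X. \<forall>i. i \<notin> {4,5,6,7,12,13,14,15} \<longrightarrow> X $ i = 0}" "X \<noteq> 0"
  shows "c1 * pnorm2 (tan_xi X) + c2 * pnorm2 (tan_eta X) < 0"
proof -
  obtain p q where pq: "tan_xi X = (0, p)" "tan_eta X = (0, q)"
    using assms(3) by (simp add: tan_xi_def tan_eta_def zero_quat_def)
  then have "p \<noteq> 0 \<or> q \<noteq> 0"
    using assms(4) tan_pair_eq_0_iff[of X] by (auto simp: tan_pair_def zero_prod_def)
  then have "c1 * qnorm2 p + c2 * qnorm2 q > 0"
    by (rule weighted_qnorm2_pos[OF assms(1,2)])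
  then show ?thesis
    by (simp add: pq pnorm2_Pair qnorm2_def[of 0])
qed

lemma metric_form_definite_subspaces:
  assumes "1 + pnorm2 u + pnorm2 v > 0"
  obtains P N :: "(real^16) set" where "subspace P" "subspace N" "dim P = 8" "dim N = 8"
    "\<forall>X\<in>P. X \<noteq> 0 \<longrightarrow> metric_form u v X X > 0" "\<forall>X\<in>N. X \<noteq> 0 \<longrightarrow> metric_form u v X X < 0"
proof -
  define \<alpha> \<beta> a D where "\<alpha> = 1 + pnorm2 v" "\<beta> = 1 + pnorm2 u" "a = pmult u (pcnj v)"
    "D = 1 + pnorm2 u + pnorm2 v"
  have "\<alpha> * \<beta> - pnorm2 a = D" "\<alpha> + \<beta> = 1 + D"
    by (simp_all add: \<alpha>_\<beta>_a_D_def pnorm2_pmult pnorm2_pcnj algebra_simps)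
  then have coeffs: "\<alpha> > 0 \<or> \<beta> > 0" "\<alpha> * \<beta> - pnorm2 a > 0"
    using assms unfolding \<alpha>_\<beta>_a_D_def(4) by linarith+
  obtain S c1 c2 where S: "linear S" "inj S" "c1 > 0" "c2 > 0"
    "\<And>z. block_form \<alpha> \<beta> a (S z) (S z) = c1 * pnorm2 (fst z) + c2 * pnorm2 (snd z)"
    using block_form_diagonalization[OF coeffs] by blast
  define f where "f = tan_vec \<circ> S \<circ> tan_pair"
  have f: "linear f" "inj f"
    unfolding f_def using S(1,2) linear_tan_pair linear_tan_vec inj_tan_pair inj_tan_vec
    by (auto intro!: linear_compose inj_compose)
  have f_diag: "metric_form u v (f X) (f X)
      = (c1 / D\<^sup>2) * pnorm2 (tan_xi X) + (c2 / D\<^sup>2) * pnorm2 (tan_eta X)" for X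
  proof -
    have "metric_form u v (f X) (f X) = block_form \<alpha> \<beta> a (S (tan_pair X)) (S (tan_pair X)) / D\<^sup>2"
      by (simp add: f_def metric_form_eq \<alpha>_\<beta>_a_D_def)
    then show ?thesis
      by (simp add: S(5) add_divide_distrib)
  qed
  have c_pos: "c1 / D\<^sup>2 > 0" "c2 / D\<^sup>2 > 0"
    using S(3,4) assms by (simp_all add: \<alpha>_\<beta>_a_D_def)
  (* P\<^sub>0 and N\<^sub>0 are spanned by the coordinates of the first, resp. second, quaternion
     halves of \<xi> and \<eta>. *)
  define P\<^sub>0 N\<^sub>0 where
    "P\<^sub>0 = {X::real^16. \<forall>i. i \<notin> {0,1,2,3,8,9,10,11} \<longrightarrow> X $ i = 0}"
    "N\<^sub>0 = {X::real^16. \<forall>i. i \<notin> {4,5,6,7,12,13,14,15} \<longrightarrow> X $ i = 0}"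
  have dims: "dim P\<^sub>0 = 8" "dim N\<^sub>0 = 8"
    unfolding P\<^sub>0_N\<^sub>0_def dim_vec_eq[symmetric] dim_substandard_cart by simp_all
  have "inj_on f (span T)" for T
    using f(2) by (simp add: inj_on_def inj_def)
  then have "dim (f ` P\<^sub>0) = 8" "dim (f ` N\<^sub>0) = 8"
    using dims dim_image_eq[OF f(1)] by simp_all
  moreover have "subspace (f ` P\<^sub>0)" "subspace (f ` N\<^sub>0)"
    unfolding P\<^sub>0_N\<^sub>0_def by (intro linear_subspace_image[OF f(1)], simp add: subspace_def)+
  moreover have "f X \<noteq> 0 \<Longrightarrow> X \<noteq> 0" for X
    using linear_0[OF f(1)] by auto
  ultimately show thesis
    using f_diag weighted_pnorm2_pos_on_coords[OF c_pos] weighted_pnorm2_neg_on_coords[OF c_pos]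
    by (intro that[of "f ` P\<^sub>0" "f ` N\<^sub>0"]) (auto simp: P\<^sub>0_N\<^sub>0_def)
qed

theorem proposition6p5:
  fixes u v :: poct
  assumes "1 + pnorm2 u + pnorm2 v > 0"
  shows "bilinear (metric_form u v)
    \<and> (\<forall>X Y. metric_form u v X Y = metric_form u v Y X)
    \<and> (\<forall>X. metric_form u v X X = ds2 u v (tan_xi X) (tan_eta X))
    \<and> nondegenerate (metric_form u v)
    \<and> has_signature (metric_form u v) 8 8"
proof -
  obtain P N where "subspace P" "subspace N" "dim P = 8" "dim N = 8"
    "\<forall>X\<in>P. X \<noteq> 0 \<longrightarrow> metric_form u v X X > 0" "\<forall>X\<in>N. X \<noteq> 0 \<longrightarrow> metric_form u v X X < 0"
    using metric_form_definite_subspaces[OF assms] .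
  then have "has_signature (metric_form u v) 8 8 \<and> nondegenerate (metric_form u v)"
    using signature_of_definite_subspaces[of "metric_form u v" P N]
      bilinear_metric_form metric_form_commute by simp
  then show ?thesis
    using bilinear_metric_form metric_form_commute metric_form_diag by blast
qed

end
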